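(* Let $\{\Pi_{\bm{x}}\}_{\bm{x}\in\{0,1\}^n}$ be a POVM on $(\mathbb{C}^2)^{\otimes n}$ with measurement channel $\mathcal{M}(\rho)=\sum_{\bm{x}}\operatorname{tr}[\Pi_{\bm{x}}\rho]|\bm{x}\rangle\langle\bm{x}|$, let $\mathcal{M}^{\mathrm{Pauli}}(\rho)=\frac{1}{4^n}\sum_{P\in\{I,X,Y,Z\}^{\otimes n}}P\mathcal{M}(P\rho P)P$, and let $\{\Pi^{\mathrm{Pauli}}_{\bm{x}}\}_{\bm{x}}$ be the POVM with $\mathcal{M}^{\mathrm{Pauli}}(\rho)=\sum_{\bm{x}}\operatorname{tr}[\Pi^{\mathrm{Pauli}}_{\bm{x}}\rho]|\bm{x}\rangle\langle\bm{x}|$ for all $\rho$. Then for all $\bm{x},\bm{y}\in\{0,1\}^n$, $$\operatorname{diag}(\Pi^{\mathrm{Pauli}}_{\bm{y}})=\mathsf{T}_{\bm{y}}\mathsf{T}_{\bm{x}}^{-1}\operatorname{diag}(\Pi^{\mathrm{Pauli}}_{\bm{x}}).$$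
   Context: $\operatorname{diag}(A)\in\mathbb{C}^{2^n}$ is the vector $(\langle\bm{w}|A|\bm{w}\rangle)_{\bm{w}\in\{0,1\}^n}$ in the computational basis. For $\bm{x}\in\{0,1\}^n$, $\mathsf{T}_{\bm{x}}$ is the $2^n\times2^n$ matrix with rows and columns indexed by $\bm{i},\bm{j}\in\{0,1\}^n$ and entries $(\mathsf{T}_{\bm{x}})_{\bm{i}\bm{j}}=(-1)^{\sum_k (x_k\oplus i_k)\,j_k}$ ($\oplus$ is addition mod 2); it is a row-permuted Sylvester–Hadamard matrix, hence invertible. *)

theory Defs
  imports "Jordan_Normal_Form.Matrix" "Jordan_Normal_Form.Gauss_Jordan_Elimination"
begin

text \<open>n-qubit Hilbert space (C^2)^{\<otimes> n} = C^(2^n). Computational basis vectors are indexed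
  by naturals w < 2^n; the bit string of w is (bitk w 0, ..., bitk w (n-1)),
  bit k belonging to qubit k.\<close>

definition bitk :: "nat \<Rightarrow> nat \<Rightarrow> nat" where
  "bitk w k = (w div 2 ^ k) mod 2"

definition trace_mat :: "complex mat \<Rightarrow> complex" where
  "trace_mat A = (\<Sum>i<dim_row A. A $$ (i, i))"

definition psd :: "nat \<Rightarrow> complex mat \<Rightarrow> bool" where
  "psd d A \<longleftrightarrow> A \<in> carrier_mat d d \<and>
     (\<forall>v \<in> carrier_vec d.
        let q = (\<Sum>i<d. \<Sum>j<d. cnj (v $ i) * A $$ (i, j) * v $ j) in Im q = 0 \<and> Re q \<ge> 0)"

definition mat_sum :: "nat \<Rightarrow> ('i \<Rightarrow> complex mat) \<Rightarrow> 'i set \<Rightarrow> complex mat" where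
  "mat_sum d f S = mat d d (\<lambda>(i, j). \<Sum>s\<in>S. f s $$ (i, j))"

definition is_povm :: "nat \<Rightarrow> (nat \<Rightarrow> complex mat) \<Rightarrow> bool" where
  "is_povm n PM \<longleftrightarrow> (\<forall>x < 2 ^ n. psd (2 ^ n) (PM x)) \<and>
     mat_sum (2 ^ n) PM {..<2 ^ n} = 1\<^sub>m (2 ^ n)"

definition ketbra :: "nat \<Rightarrow> nat \<Rightarrow> complex mat" where
  "ketbra d x = mat d d (\<lambda>(i, j). if i = x \<and> j = x then 1 else 0)"

definition meas_channel :: "nat \<Rightarrow> (nat \<Rightarrow> complex mat) \<Rightarrow> complex mat \<Rightarrow> complex mat" where
  "meas_channel n PM rho = mat_sum (2 ^ n) (\<lambda>x. trace_mat (PM x * rho) \<cdot>\<^sub>m ketbra (2 ^ n) x) {..<2 ^ n}"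

text \<open>Single-qubit Paulis: 0 = I, 1 = X, 2 = Y, 3 = Z; entries indexed by bits a, b.\<close>
definition sigma :: "nat \<Rightarrow> nat \<Rightarrow> nat \<Rightarrow> complex" where
  "sigma p a b =
     (if p = 0 then (if a = b then 1 else 0)
      else if p = 1 then (if a \<noteq> b then 1 else 0)
      else if p = 2 then (if a = 0 \<and> b = 1 then - \<i> else if a = 1 \<and> b = 0 then \<i> else 0)
      else (if a = b then (if a = 0 then 1 else -1) else 0))"

text \<open>Pauli strings {I,X,Y,Z}^{\<otimes> n}, encoded by label functions p with p k < 4 for k < n
  and p k = 0 otherwise (so each string has exactly one label).\<close>
definition pauli_labels :: "nat \<Rightarrow> (nat \<Rightarrow> nat) set" where
  "pauli_labels n = {p. \<forall>k. (k < n \<longrightarrow> p k < 4) \<and> (k \<ge> n \<longrightarrow> p k = 0)}"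

definition pauli_mat :: "nat \<Rightarrow> (nat \<Rightarrow> nat) \<Rightarrow> complex mat" where
  "pauli_mat n p = mat (2 ^ n) (2 ^ n) (\<lambda>(i, j). \<Prod>k<n. sigma (p k) (bitk i k) (bitk j k))"

definition pauli_twirl :: "nat \<Rightarrow> (nat \<Rightarrow> complex mat) \<Rightarrow> complex mat \<Rightarrow> complex mat" where
  "pauli_twirl n PM rho = (1 / 4 ^ n) \<cdot>\<^sub>m
     mat_sum (2 ^ n) (\<lambda>p. pauli_mat n p * meas_channel n PM (pauli_mat n p * rho * pauli_mat n p) * pauli_mat n p)
       (pauli_labels n)"

definition Tmat :: "nat \<Rightarrow> nat \<Rightarrow> complex mat" where
  "Tmat n x = mat (2 ^ n) (2 ^ n)
     (\<lambda>(i, j). (-1) ^ (\<Sum>k<n. ((bitk x k + bitk i k) mod 2) * bitk j k))"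

definition diag_vec :: "complex mat \<Rightarrow> complex vec" where
  "diag_vec A = vec (dim_row A) (\<lambda>w. A $$ (w, w))"

end

theory Submission
  imports Defs "Jordan_Normal_Form.Determinant"
begin

text \<open>Pauli twirling makes the diagonal of each POVM element translation invariant: evaluating
  both channels on |w><w| at entry (y, y) and summing over the Pauli strings qubit by qubit gives
  Pi^Pauli_y(w, w) = 2^-n sum_j Pi_(y+w+j)(j, j), addition being bitwise mod 2, which depends on
  y + w only. Hence diag Pi^Pauli_y is diag Pi^Pauli_x permuted by i |-> (x + y) + i. As
  T_x(i, j) = (-1)^((x + i).j), the same permutation of rows maps T_x to T_y, and T_x T_x^T = 2^n I
  makes T_x invertible; so T_y T_x^-1 is exactly that permutation matrix.\<close>

lemma bitk_eq_of_bool_bit: "bitk a k = of_bool (bit a k)"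
  unfolding bitk_def bit_iff_odd by (simp add: odd_iff_mod_2_eq_one)

lemma bitk_less_2: "bitk a k < 2"
  unfolding bitk_def by simp

lemma bitk_eq_iff_bit_eq: "bitk a k = bitk b j \<longleftrightarrow> bit a k = bit b j"
  unfolding bitk_eq_of_bool_bit by simp

lemma bitk_xor: "bitk (xor a b) k = (bitk a k + bitk b k) mod 2"
  unfolding bitk_eq_of_bool_bit by (auto simp: bit_xor_iff)

lemma xor_less_power2:
  fixes a b :: nat
  assumes "a < 2 ^ n" "b < 2 ^ n"
  shows "xor a b < 2 ^ n"
proof -
  have "take_bit n (xor a b) = xor (take_bit n a) (take_bit n b)"
    by (rule take_bit_xor)
  also have "\<dots> = xor a b"
    using assms by (simp add: take_bit_nat_eq_self)
  finally show ?thesis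
    by (metis take_bit_nat_less_exp)
qed

lemma xor_xor_cancel_left: "xor a (xor (xor a b) c) = xor b (c :: nat)"
  by (rule bit_eqI) (auto simp: bit_xor_iff)

lemma bitk_eq_iff_eq:
  fixes a b :: nat
  assumes "a < 2 ^ n" "b < 2 ^ n"
  shows "(\<forall>k<n. bitk a k = bitk b k) \<longleftrightarrow> a = b"
proof
  assume low: "\<forall>k<n. bitk a k = bitk b k"
  have "take_bit n a = take_bit n b"
  proof (rule bit_eqI)
    fix k
    show "bit (take_bit n a) k = bit (take_bit n b) k"
      using low by (cases "k < n") (simp_all add: bit_take_bit_iff bitk_eq_iff_bit_eq)
  qed
  then show "a = b"
    using assms by (simp add: take_bit_nat_eq_self)
qed simp

lemma bitk_add_power2:
  assumes "k < 2 ^ n"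
  shows "bitk (k + 2 ^ n) m = (if m = n then 1 else bitk k m)"
proof -
  have "\<not> bit k n"
    using assms bit_take_bit_iff[of n k n] by (simp add: take_bit_nat_eq_self)
  then have "k + 2 ^ n = set_bit n k"
    by (simp add: set_bit_eq)
  then show ?thesis
    by (simp add: bitk_eq_of_bool_bit bit_set_bit_iff)
qed

lemma sum_lessThan_double:
  "(\<Sum>k<2 * (N::nat). f k) = (\<Sum>k<N. f k) + (\<Sum>k<N. f (k + N))"
proof -
  have "{..<2 * N} = {0..<N} \<union> {0 + N..<N + N}" by auto
  then show ?thesis
    by (simp add: sum.union_disjoint lessThan_atLeast0 flip: sum.shift_bounds_nat_ivl)
qed

lemma sum_bitstrings_prod:
  fixes g :: "nat \<Rightarrow> nat \<Rightarrow> 'a::comm_semiring_1"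
  shows "(\<Sum>k<2 ^ n. \<Prod>m<n. g m (bitk k m)) = (\<Prod>m<n. \<Sum>b<2. g m b)"
proof (induction n)
  case (Suc n)
  have high: "bitk k n = 0" if "k < 2 ^ n" for k
    using that by (simp add: bitk_def)
  have low: "(\<Prod>m<n. g m (bitk (k + 2 ^ n) m)) = (\<Prod>m<n. g m (bitk k m))"
    if "k < 2 ^ n" for k
    using that by (intro prod.cong) (simp_all add: bitk_add_power2)
  have "(\<Sum>k<2 ^ Suc n. \<Prod>m<Suc n. g m (bitk k m))
      = (\<Sum>k<2 ^ n. (\<Prod>m<n. g m (bitk k m)) * g n 0)
        + (\<Sum>k<2 ^ n. (\<Prod>m<n. g m (bitk k m)) * g n 1)"
    by (simp add: sum_lessThan_double high low bitk_add_power2)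
  also have "\<dots> = (\<Prod>m<n. \<Sum>b<2. g m b) * (g n 0 + g n 1)"
    by (simp add: Suc.IH flip: sum_distrib_right distrib_left)
  also have "\<dots> = (\<Prod>m<Suc n. \<Sum>b<2. g m b)"
    by (simp add: numeral_2_eq_2)
  finally show ?case .
qed simp

lemma prod_if_zero:
  fixes c :: "'a::comm_semiring_1"
  shows "(\<Prod>m<n. if P m then c else 0) = (if \<forall>m<n. P m then c ^ n else 0)"
  by (auto intro!: prod_zero)

lemma sum_pauli_labels_prod:
  fixes f :: "nat \<Rightarrow> nat \<Rightarrow> 'a::comm_semiring_1"
  shows "(\<Sum>p\<in>pauli_labels n. \<Prod>m<n. f m (p m)) = (\<Prod>m<n. \<Sum>q<4. f m q)"
proof -
  have "(\<Prod>m<n. \<Sum>q<4. f m q) = (\<Sum>g\<in>PiE {..<n} (\<lambda>_. {..<4}). \<Prod>m<n. f m (g m))"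
    by (rule prod_sum_PiE) auto
  also have "\<dots> = (\<Sum>p\<in>pauli_labels n. \<Prod>m<n. f m (p m))"
    by (rule sum.reindex_bij_witness[of _ "\<lambda>p. restrict p {..<n}" "\<lambda>g k. if k < n then g k else 0"])
      (auto simp: pauli_labels_def PiE_def extensional_def intro: prod.cong)
  finally show ?thesis by simp
qed

lemma sum_lessThan_4: "(\<Sum>q<4. f q) = f 0 + f 1 + f 2 + f (3::nat)"
  by (simp add: eval_nat_numeral)

lemma sigma_twirl_sum:
  assumes "a < 2" "b < 2" "c < 2" "d < 2" "e < 2"
  shows "(\<Sum>q<4. sigma q a b * sigma q c d * sigma q d e * sigma q b a) =
    (if b = (a + c + d) mod 2 \<and> c = e then 2 else 0)"
proof -
  have "a = 0 \<or> a = 1" "b = 0 \<or> b = 1" "c = 0 \<or> c = 1" "d = 0 \<or> d = 1" "e = 0 \<or> e = 1"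
    using assms by auto
  then show ?thesis
    unfolding sum_lessThan_4 by (elim disjE) (simp_all add: sigma_def)
qed

lemma index_mult_mat_sum:
  assumes "A \<in> carrier_mat nr d" "B \<in> carrier_mat d nc" "i < nr" "j < nc"
  shows "(A * B) $$ (i, j) = (\<Sum>l<d. A $$ (i, l) * B $$ (l, j))"
  using assms by (simp add: scalar_prod_def atLeast0LessThan)

lemma index_mult_diagonal_mult:
  assumes "A \<in> carrier_mat nr d" "D \<in> carrier_mat d d" "B \<in> carrier_mat d nc"
    and "diagonal_mat D" "i < nr" "j < nc"
  shows "(A * D * B) $$ (i, j) = (\<Sum>k<d. A $$ (i, k) * D $$ (k, k) * B $$ (k, j))"
proof -
  have AD: "(A * D) $$ (i, k) = A $$ (i, k) * D $$ (k, k)" if "k < d" for k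
  proof -
    have "(A * D) $$ (i, k) = (\<Sum>l<d. if l = k then A $$ (i, l) * D $$ (l, k) else 0)"
      using assms that by (intro trans[OF index_mult_mat_sum] sum.cong) (auto simp: diagonal_mat_def)
    then show ?thesis
      using that by simp
  qed
  have "(A * D * B) $$ (i, j) = (\<Sum>k<d. (A * D) $$ (i, k) * B $$ (k, j))"
    using assms by (intro index_mult_mat_sum) auto
  then show ?thesis
    by (simp add: AD)
qed

lemma trace_mat_mult:
  assumes "A \<in> carrier_mat d m" "B \<in> carrier_mat m d"
  shows "trace_mat (A * B) = (\<Sum>i<d. \<Sum>j<m. A $$ (i, j) * B $$ (j, i))"
  using assms unfolding trace_mat_def by (simp add: scalar_prod_def atLeast0LessThan)

lemma ketbra_carrier: "ketbra d w \<in> carrier_mat d d"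
  by (simp add: ketbra_def)

lemma diagonal_ketbra: "diagonal_mat (ketbra d w)"
  by (simp add: ketbra_def diagonal_mat_def)

lemma index_ketbra: "i < d \<Longrightarrow> j < d \<Longrightarrow> ketbra d w $$ (i, j) = of_bool (i = w \<and> j = w)"
  by (simp add: ketbra_def)

lemma meas_channel_carrier: "meas_channel n PM rho \<in> carrier_mat (2 ^ n) (2 ^ n)"
  by (simp add: meas_channel_def mat_sum_def)

lemma index_meas_channel:
  assumes "i < 2 ^ n" "j < 2 ^ n"
  shows "meas_channel n PM rho $$ (i, j) = (if i = j then trace_mat (PM i * rho) else 0)"
proof -
  have "x * (if P then 1 else 0) = (if P then x else 0)" for x :: complex and P
    by simp
  then show ?thesis
    using assms by (simp add: meas_channel_def mat_sum_def ketbra_def sum.neutral)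
qed

lemma diagonal_meas_channel: "diagonal_mat (meas_channel n PM rho)"
  by (simp add: diagonal_mat_def index_meas_channel meas_channel_carrier[THEN carrier_matD(1)]
      meas_channel_carrier[THEN carrier_matD(2)])

lemma pauli_mat_carrier: "pauli_mat n p \<in> carrier_mat (2 ^ n) (2 ^ n)"
  by (simp add: pauli_mat_def)

lemma index_pauli_mat:
  "i < 2 ^ n \<Longrightarrow> j < 2 ^ n \<Longrightarrow>
    pauli_mat n p $$ (i, j) = (\<Prod>k<n. sigma (p k) (bitk i k) (bitk j k))"
  by (simp add: pauli_mat_def)

lemma sum_pauli_twirl_entries:
  assumes "y < 2 ^ n" "k < 2 ^ n" "j < 2 ^ n" "w < 2 ^ n" "i < 2 ^ n"
  shows "(\<Sum>p\<in>pauli_labels n. pauli_mat n p $$ (y, k) * pauli_mat n p $$ (j, w) *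
      pauli_mat n p $$ (w, i) * pauli_mat n p $$ (k, y))
    = (if k = xor (xor y w) j \<and> j = i then 2 ^ n else 0)"
proof -
  have bits_xor: "bitk (xor (xor y w) j) m = (bitk y m + bitk j m + bitk w m) mod 2" for m
    by (simp add: bitk_xor) presburger
  have "(\<Sum>p\<in>pauli_labels n. pauli_mat n p $$ (y, k) * pauli_mat n p $$ (j, w) *
      pauli_mat n p $$ (w, i) * pauli_mat n p $$ (k, y))
    = (\<Sum>p\<in>pauli_labels n. \<Prod>m<n. sigma (p m) (bitk y m) (bitk k m) *
        sigma (p m) (bitk j m) (bitk w m) * sigma (p m) (bitk w m) (bitk i m) *
        sigma (p m) (bitk k m) (bitk y m))"
    using assms by (simp add: index_pauli_mat prod.distrib)
  also have "\<dots> = (\<Prod>m<n. \<Sum>q<4. sigma q (bitk y m) (bitk k m) * sigma q (bitk j m) (bitk w m) *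
      sigma q (bitk w m) (bitk i m) * sigma q (bitk k m) (bitk y m))"
    by (rule sum_pauli_labels_prod)
  also have "\<dots> = (\<Prod>m<n. if bitk k m = bitk (xor (xor y w) j) m \<and> bitk j m = bitk i m then 2 else 0)"
    unfolding bits_xor by (intro prod.cong refl sigma_twirl_sum) (simp_all add: bitk_less_2)
  also have "\<dots> = (if k = xor (xor y w) j \<and> j = i then 2 ^ n else 0)"
  proof -
    have "xor (xor y w) j < 2 ^ n"
      using assms by (simp add: xor_less_power2)
    then have "(\<forall>m<n. bitk k m = bitk (xor (xor y w) j) m \<and> bitk j m = bitk i m)
        \<longleftrightarrow> k = xor (xor y w) j \<and> j = i"
      using assms bitk_eq_iff_eq[of k n] bitk_eq_iff_eq[of j n i] by blast
    then show ?thesis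
      by (simp add: prod_if_zero)
  qed
  finally show ?thesis .
qed

lemma pauli_twirl_ketbra_diag:
  assumes PM: "\<And>k. k < 2 ^ n \<Longrightarrow> PM k \<in> carrier_mat (2 ^ n) (2 ^ n)"
    and y: "y < 2 ^ n" and w: "w < 2 ^ n"
  shows "pauli_twirl n PM (ketbra (2 ^ n) w) $$ (y, y)
    = (\<Sum>j<2 ^ n. PM (xor (xor y w) j) $$ (j, j)) / 2 ^ n"
proof -
  let ?P = "pauli_mat n" and ?E = "ketbra (2 ^ n) w"
  have PEP: "(?P p * ?E * ?P p) $$ (j, i) = ?P p $$ (j, w) * ?P p $$ (w, i)"
    if "j < 2 ^ n" "i < 2 ^ n" for p j i
  proof -
    have "(?P p * ?E * ?P p) $$ (j, i) = (\<Sum>k<2 ^ n. ?P p $$ (j, k) * ?E $$ (k, k) * ?P p $$ (k, i))"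
      using that by (rule index_mult_diagonal_mult[OF pauli_mat_carrier ketbra_carrier
            pauli_mat_carrier diagonal_ketbra])
    also have "\<dots> = (\<Sum>k<2 ^ n. if k = w then ?P p $$ (j, k) * ?P p $$ (k, i) else 0)"
      by (intro sum.cong) (auto simp: index_ketbra)
    finally show ?thesis
      using w by simp
  qed
  have PMP: "(?P p * meas_channel n PM (?P p * ?E * ?P p) * ?P p) $$ (y, y)
      = (\<Sum>k<2 ^ n. \<Sum>i<2 ^ n. \<Sum>j<2 ^ n. PM k $$ (i, j) *
          (?P p $$ (y, k) * ?P p $$ (j, w) * ?P p $$ (w, i) * ?P p $$ (k, y)))" for p
  proof -
    have "?P p * ?E * ?P p \<in> carrier_mat (2 ^ n) (2 ^ n)"
      using pauli_mat_carrier ketbra_carrier by (intro mult_carrier_mat)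
    then have "trace_mat (PM k * (?P p * ?E * ?P p))
        = (\<Sum>i<2 ^ n. \<Sum>j<2 ^ n. PM k $$ (i, j) * (?P p $$ (j, w) * ?P p $$ (w, i)))"
      if "k < 2 ^ n" for k
      using that by (simp add: trace_mat_mult[OF PM] PEP)
    then show ?thesis
      using y by (simp add: index_mult_diagonal_mult[OF pauli_mat_carrier meas_channel_carrier
            pauli_mat_carrier diagonal_meas_channel] index_meas_channel sum_distrib_left
            sum_distrib_right ac_simps)
  qed
  have "pauli_twirl n PM ?E $$ (y, y) = (\<Sum>p\<in>pauli_labels n.
      (?P p * meas_channel n PM (?P p * ?E * ?P p) * ?P p) $$ (y, y)) / 4 ^ n"
    using y by (simp add: pauli_twirl_def mat_sum_def)
  also have "\<dots> = (\<Sum>k<2 ^ n. \<Sum>i<2 ^ n. \<Sum>j<2 ^ n. PM k $$ (i, j) *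
      (\<Sum>p\<in>pauli_labels n. ?P p $$ (y, k) * ?P p $$ (j, w) * ?P p $$ (w, i) * ?P p $$ (k, y)))
      / 4 ^ n"
    by (simp add: PMP sum_distrib_left sum.swap[of _ "pauli_labels n"])
  also have "\<dots> = (\<Sum>k<2 ^ n. \<Sum>i<2 ^ n. \<Sum>j<2 ^ n.
      PM k $$ (i, j) * (if k = xor (xor y w) j \<and> j = i then 2 ^ n else 0)) / 4 ^ n"
    using y w by (simp add: sum_pauli_twirl_entries)
  also have "\<dots> = (\<Sum>j<2 ^ n. \<Sum>i<2 ^ n. \<Sum>k<2 ^ n.
      if k = xor (xor y w) j then if i = j then PM k $$ (i, j) * 2 ^ n else 0 else 0) / 4 ^ n"
    \<comment> \<open>reorder to \<open>\<Sum>j \<Sum>i \<Sum>k\<close> so that both deltas collapse from the inside\<close>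
    by (subst sum.swap, subst (2) sum.swap, subst sum.swap)
      (intro arg_cong2[where f = "(/)"] sum.cong; auto)
  also have "\<dots> = (\<Sum>j<2 ^ n. PM (xor (xor y w) j) $$ (j, j) * 2 ^ n) / 4 ^ n"
    using y w by (simp add: xor_less_power2)
  also have "\<dots> = (\<Sum>j<2 ^ n. PM (xor (xor y w) j) $$ (j, j)) / 2 ^ n"
  proof -
    have "(4::complex) ^ n = 2 ^ n * 2 ^ n"
      by (simp flip: power_mult_distrib)
    then show ?thesis
      by (simp flip: sum_distrib_right)
  qed
  finally show ?thesis .
qed

lemma povm_carrier: "is_povm n PM \<Longrightarrow> x < 2 ^ n \<Longrightarrow> PM x \<in> carrier_mat (2 ^ n) (2 ^ n)"
  by (simp add: is_povm_def psd_def)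

lemma trace_mat_mult_ketbra:
  assumes "A \<in> carrier_mat d d" "w < d"
  shows "trace_mat (A * ketbra d w) = A $$ (w, w)"
proof -
  have "trace_mat (A * ketbra d w) = (\<Sum>i<d. \<Sum>j<d. A $$ (i, j) * ketbra d w $$ (j, i))"
    by (rule trace_mat_mult[OF assms(1) ketbra_carrier])
  also have "\<dots> = (\<Sum>i<d. \<Sum>j<d. if j = w then if i = w then A $$ (i, j) else 0 else 0)"
    by (intro sum.cong refl) (simp add: index_ketbra)
  finally show ?thesis
    using assms(2) by simp
qed

lemma twirled_povm_diag:
  assumes PM: "\<And>k. k < 2 ^ n \<Longrightarrow> PM k \<in> carrier_mat (2 ^ n) (2 ^ n)"
    and PMp: "PMp y \<in> carrier_mat (2 ^ n) (2 ^ n)"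
    and twirl: "\<forall>rho \<in> carrier_mat (2 ^ n) (2 ^ n). pauli_twirl n PM rho = meas_channel n PMp rho"
    and y: "y < 2 ^ n" and w: "w < 2 ^ n"
  shows "PMp y $$ (w, w) = (\<Sum>j<2 ^ n. PM (xor (xor y w) j) $$ (j, j)) / 2 ^ n"
proof -
  have "PMp y $$ (w, w) = meas_channel n PMp (ketbra (2 ^ n) w) $$ (y, y)"
    using y w PMp by (simp add: index_meas_channel trace_mat_mult_ketbra)
  also have "\<dots> = pauli_twirl n PM (ketbra (2 ^ n) w) $$ (y, y)"
    using twirl ketbra_carrier by metis
  also have "\<dots> = (\<Sum>j<2 ^ n. PM (xor (xor y w) j) $$ (j, j)) / 2 ^ n"
    using PM y w by (rule pauli_twirl_ketbra_diag)
  finally show ?thesis .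
qed

definition xor_perm_mat :: "nat \<Rightarrow> nat \<Rightarrow> complex mat" where
  "xor_perm_mat n c = mat (2 ^ n) (2 ^ n) (\<lambda>(i, j). of_bool (j = xor c i))"

lemma xor_perm_mat_carrier: "xor_perm_mat n c \<in> carrier_mat (2 ^ n) (2 ^ n)"
  by (simp add: xor_perm_mat_def)

lemma index_xor_perm_mat_mult:
  assumes "A \<in> carrier_mat (2 ^ n) nc" "c < 2 ^ n" "i < 2 ^ n" "j < nc"
  shows "(xor_perm_mat n c * A) $$ (i, j) = A $$ (xor c i, j)"
proof -
  have "(xor_perm_mat n c * A) $$ (i, j) = (\<Sum>l<2 ^ n. xor_perm_mat n c $$ (i, l) * A $$ (l, j))"
    by (rule index_mult_mat_sum[OF xor_perm_mat_carrier assms(1,3,4)])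
  also have "\<dots> = (\<Sum>l<2 ^ n. if l = xor c i then A $$ (l, j) else 0)"
    using assms(3) by (intro sum.cong) (auto simp: xor_perm_mat_def)
  finally show ?thesis
    using assms by (simp add: xor_less_power2)
qed

lemma index_xor_perm_mat_mult_vec:
  assumes "v \<in> carrier_vec (2 ^ n)" "c < 2 ^ n" "i < 2 ^ n"
  shows "(xor_perm_mat n c *\<^sub>v v) $ i = v $ xor c i"
proof -
  have "(xor_perm_mat n c *\<^sub>v v) $ i = (\<Sum>l<2 ^ n. if l = xor c i then v $ l else 0)"
    using assms by (simp add: xor_perm_mat_def scalar_prod_def atLeast0LessThan)
  then show ?thesis
    using assms by (simp add: xor_less_power2)
qed

lemma diag_twirled_povm_xor_shift:
  assumes PM: "is_povm n PM" and PMp: "is_povm n PMp"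
    and twirl: "\<forall>rho \<in> carrier_mat (2 ^ n) (2 ^ n). pauli_twirl n PM rho = meas_channel n PMp rho"
    and x: "x < 2 ^ n" and y: "y < 2 ^ n"
  shows "diag_vec (PMp y) = xor_perm_mat n (xor x y) *\<^sub>v diag_vec (PMp x)"
proof (rule eq_vecI)
  have PMx: "PMp x \<in> carrier_mat (2 ^ n) (2 ^ n)" and PMy: "PMp y \<in> carrier_mat (2 ^ n) (2 ^ n)"
    using PMp x y by (simp_all add: povm_carrier)
  then show "dim_vec (diag_vec (PMp y)) = dim_vec (xor_perm_mat n (xor x y) *\<^sub>v diag_vec (PMp x))"
    by (simp add: diag_vec_def xor_perm_mat_def)
  fix w
  assume "w < dim_vec (xor_perm_mat n (xor x y) *\<^sub>v diag_vec (PMp x))"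
  then have w: "w < 2 ^ n"
    by (simp add: xor_perm_mat_def)
  have shift: "xor x y < 2 ^ n" "xor (xor x y) w < 2 ^ n"
    using x y w by (simp_all add: xor_less_power2)
  have "(xor_perm_mat n (xor x y) *\<^sub>v diag_vec (PMp x)) $ w
      = PMp x $$ (xor (xor x y) w, xor (xor x y) w)"
    using PMx w shift by (simp add: index_xor_perm_mat_mult_vec diag_vec_def)
  also have "\<dots> = (\<Sum>j<2 ^ n. PM (xor (xor y w) j) $$ (j, j)) / 2 ^ n"
    using twirled_povm_diag[OF povm_carrier[OF PM] PMx twirl x shift(2)]
    by (simp add: xor_xor_cancel_left)
  also have "\<dots> = diag_vec (PMp y) $ w"
    using twirled_povm_diag[OF povm_carrier[OF PM] PMy twirl y w] PMy w by (simp add: diag_vec_def)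
  finally show "diag_vec (PMp y) $ w = (xor_perm_mat n (xor x y) *\<^sub>v diag_vec (PMp x)) $ w" ..
qed

lemma Tmat_carrier: "Tmat n x \<in> carrier_mat (2 ^ n) (2 ^ n)"
  by (simp add: Tmat_def)

lemma index_Tmat:
  assumes "i < 2 ^ n" "j < 2 ^ n"
  shows "Tmat n x $$ (i, j) = (\<Prod>m<n. (-1) ^ (bitk (xor x i) m * bitk j m))"
  using assms by (simp add: Tmat_def bitk_xor power_sum)

lemma Tmat_xor_shift:
  assumes x: "x < 2 ^ n" and y: "y < 2 ^ n"
  shows "Tmat n y = xor_perm_mat n (xor x y) * Tmat n x"
proof (rule eq_matI)
  fix i j
  assume "i < dim_row (xor_perm_mat n (xor x y) * Tmat n x)"
    and "j < dim_col (xor_perm_mat n (xor x y) * Tmat n x)"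
  then have i: "i < 2 ^ n" and j: "j < 2 ^ n"
    by (simp_all add: xor_perm_mat_def Tmat_def)
  have "(xor_perm_mat n (xor x y) * Tmat n x) $$ (i, j) = Tmat n x $$ (xor (xor x y) i, j)"
    using x y i j by (simp add: index_xor_perm_mat_mult[OF Tmat_carrier] xor_less_power2)
  also have "\<dots> = Tmat n y $$ (i, j)"
    using x y i j by (simp add: index_Tmat xor_less_power2 xor_xor_cancel_left)
  finally show "Tmat n y $$ (i, j) = (xor_perm_mat n (xor x y) * Tmat n x) $$ (i, j)" ..
qed (simp_all add: xor_perm_mat_def Tmat_def)

lemma sum_sign_bits:
  assumes "a < 2" "b < 2"
  shows "(\<Sum>c<2. (-1) ^ (a * c) * (-1) ^ (b * c)) = (if a = b then 2 else (0::'a::comm_ring_1))"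
proof -
  have "a = 0 \<or> a = 1" "b = 0 \<or> b = 1"
    using assms by auto
  then show ?thesis
    by (elim disjE) (simp_all add: numeral_2_eq_2)
qed

lemma Tmat_mult_transpose:
  "Tmat n x * transpose_mat (Tmat n x) = (2 ^ n) \<cdot>\<^sub>m 1\<^sub>m (2 ^ n)"
proof (rule eq_matI)
  fix i j
  assume "i < dim_row ((2 ^ n) \<cdot>\<^sub>m 1\<^sub>m (2 ^ n) :: complex mat)"
    and "j < dim_col ((2 ^ n) \<cdot>\<^sub>m 1\<^sub>m (2 ^ n) :: complex mat)"
  then have i: "i < 2 ^ n" and j: "j < 2 ^ n"
    by simp_all
  have "(Tmat n x * transpose_mat (Tmat n x)) $$ (i, j)
      = (\<Sum>k<2 ^ n. Tmat n x $$ (i, k) * Tmat n x $$ (j, k))"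
    using i j by (simp add: index_mult_mat_sum[OF Tmat_carrier, of _ _ "2 ^ n"] Tmat_carrier)
      (intro sum.cong refl; simp add: Tmat_def)
  also have "\<dots> = (\<Sum>k<2 ^ n. \<Prod>m<n.
      (-1) ^ (bitk (xor x i) m * bitk k m) * (-1) ^ (bitk (xor x j) m * bitk k m))"
    using i j by (simp add: index_Tmat prod.distrib)
  also have "\<dots> = (\<Prod>m<n. \<Sum>c<2. (-1) ^ (bitk (xor x i) m * c) * (-1) ^ (bitk (xor x j) m * c))"
    by (rule sum_bitstrings_prod)
  also have "\<dots> = (\<Prod>m<n. if bitk (xor x i) m = bitk (xor x j) m then 2 else 0)"
    by (intro prod.cong refl sum_sign_bits bitk_less_2)
  also have "\<dots> = (if i = j then 2 ^ n else 0)"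
  proof -
    have "bitk (xor x i) m = bitk (xor x j) m \<longleftrightarrow> bitk i m = bitk j m" for m
      using bitk_less_2[of i m] bitk_less_2[of j m] unfolding bitk_xor by presburger
    then show ?thesis
      using i j by (simp add: prod_if_zero bitk_eq_iff_eq)
  qed
  finally show "(Tmat n x * transpose_mat (Tmat n x)) $$ (i, j)
      = ((2 ^ n) \<cdot>\<^sub>m 1\<^sub>m (2 ^ n)) $$ (i, j)"
    using i j by simp
qed (simp_all add: Tmat_def)

lemma mat_inverse_eq_Some:
  fixes A B :: "'a::field mat"
  assumes A: "A \<in> carrier_mat n n" and B: "B \<in> carrier_mat n n" and AB: "A * B = 1\<^sub>m n"
  shows "mat_inverse A = Some B"
proof (cases "mat_inverse A")
  case None
  have "A \<in> Units (ring_mat TYPE('a) n ())"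
    using A B AB mat_mult_left_right_inverse[OF A B AB] by (auto simp: Units_def ring_mat_def)
  with mat_inverse(1)[OF A None, where b = "()"] show ?thesis
    by blast
next
  case (Some C)
  then have CA: "C * A = 1\<^sub>m n" and C: "C \<in> carrier_mat n n"
    using mat_inverse(2)[OF A] by auto
  have "C = C * (A * B)"
    using C AB by simp
  also have "\<dots> = B"
    using A B C CA by (simp flip: assoc_mult_mat)
  finally show ?thesis
    using Some by simp
qed

lemma Tmat_mult_inverse:
  assumes "x < 2 ^ n" "y < 2 ^ n"
  shows "Tmat n y * the (mat_inverse (Tmat n x)) = xor_perm_mat n (xor x y)"
proof -
  define B where "B = (1 / 2 ^ n) \<cdot>\<^sub>m transpose_mat (Tmat n x)"
  have B: "B \<in> carrier_mat (2 ^ n) (2 ^ n)"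
    by (simp add: B_def Tmat_def)
  have "Tmat n x * B = (1 / 2 ^ n) \<cdot>\<^sub>m (Tmat n x * transpose_mat (Tmat n x))"
    unfolding B_def
    by (rule mult_smult_distrib[OF Tmat_carrier transpose_carrier_mat[THEN iffD2, OF Tmat_carrier]])
  also have "\<dots> = 1\<^sub>m (2 ^ n)"
    unfolding Tmat_mult_transpose by (rule eq_matI) auto
  finally have TB: "Tmat n x * B = 1\<^sub>m (2 ^ n)" .
  have "Tmat n y * B = xor_perm_mat n (xor x y) * Tmat n x * B"
    unfolding Tmat_xor_shift[OF assms] ..
  also have "\<dots> = xor_perm_mat n (xor x y)"
    using B TB by (simp add: assoc_mult_mat[OF xor_perm_mat_carrier Tmat_carrier]
        right_mult_one_mat[OF xor_perm_mat_carrier])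
  finally show ?thesis
    using mat_inverse_eq_Some[OF Tmat_carrier B TB] by simp
qed

theorem proposition5:
  fixes n :: nat and PM PMp :: "nat \<Rightarrow> complex mat" and x y :: nat
  assumes "is_povm n PM"
    and "is_povm n PMp"
    and "\<forall>rho \<in> carrier_mat (2 ^ n) (2 ^ n). pauli_twirl n PM rho = meas_channel n PMp rho"
    and "x < 2 ^ n" and "y < 2 ^ n"
  shows "diag_vec (PMp y) = (Tmat n y * the (mat_inverse (Tmat n x))) *\<^sub>v diag_vec (PMp x)"
  using diag_twirled_povm_xor_shift[OF assms] Tmat_mult_inverse[OF assms(4,5)] by simp

end
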